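(* Work in Scenario 2 with a common prior, and assume that each $v_i$ has a density on $[\underline v_i,\bar v_i]$ and that for each $i$ the map $g_i(v)=v-\sum_{j\ne i}\mathbb E[\eta_{j\leftarrow i}\mid v_i=v]$ is non-decreasing on $[\underline v_i,\bar v_i]$. Let $\tau_i=\inf\{v\in[\underline v_i,\bar v_i]:g_i(v)\ge0\}$ (with $\inf\emptyset:=\bar v_i$). Define the mechanism: for $\mathbf t\in T$, $x_i(\mathbf t)=\mathbf 1\{g_i(v_i)\ge 0\}$; when bidder $i$ abstains, $x_i=p_i=0$ and $x_j(\emptyset,\mathbf t_{-i})=\mathbf 1\{v_j\ge\sum_{k\in N\setminus\{i,j\}}\mathbb E[\eta_{k\leftarrow j}\mid v_j]\}$ for $j\neq i$; and $$p_i(\mathbf t)=\tau_i\,x_i(\mathbf t)-\sum_{j\ne i}\mathbb E\big[\eta_{i\leftarrow j}\,x_j(\mathbf t)\big]-C_i,$$ where the expectation is over $t_j\sim F_j$ (so it is a constant), and $C_i$ is a constant with $C_i\ge c_i^\emptyset:=-\sum_{j\ne i}\mathbb E\big[\eta_{i\leftarrow j}\,x_j(\emptyset,\mathbf t_{-i})\big]$. Then: (a) this mechanism (with payments allowed to be real numbers) is BNIC and interim IR, and for $C_i=c_i^\emptyset$ all payments are nonnegative; (b) for every BNIC mechanism $(\mathbf x',\mathbf p')$, $\mathbb E[\mathrm{SW}(\mathbf x'(\mathbf t);\mathbf t)]\le\mathbb E[\mathrm{SW}(\mathbf x(\mathbf t);\mathbf t)]$, where $\mathrm{SW}(\mathbf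 z;\mathbf t)=\sum_{i\in N}\nu_i(\mathbf z)=\sum_{i\in N}\big(v_i-\sum_{j\ne i}\eta_{j\leftarrow i}\big)z_i$.
   Context: Model: there are $n$ bidders $N=\{1,\dots,n\}$ and a seller of a freely replicable good; an allocation is any $\mathbf x\in[0,1]^n$. Bidder $i$ has value $v_i\in[\underline v_i,\bar v_i]\subset\mathbb R_{\ge0}$ and for $j\ne i$ parameters $\eta_{i\leftarrow j}\in[\underline\eta_{i\leftarrow j},\bar\eta_{i\leftarrow j}]\subset\mathbb R_{\ge0}$; valuation $\nu_i(\mathbf x)=v_ix_i-\sum_{j\ne i}\eta_{i\leftarrow j}x_j$, utility $\nu_i(\mathbf x)-p_i$. In Scenario 2, bidder $i$'s private type is $t_i=(v_i,(\eta_{j\leftarrow i})_{j\ne i})\in T_i=[\underline v_i,\bar v_i]\times\prod_{j\ne i}[\underline\eta_{j\leftarrow i},\bar\eta_{j\leftarrow i}]$ (she knows the externalities she exerts on others). Bids lie in $B_i=T_i\cup\{\emptyset\}$; a mechanism is $\mathbf x:B\to[0,1]^n$, $\mathbf p:B\to\mathbb R^n_{\ge0}$ with $x_i=p_i=0$ when $i$ bids $\emptyset$, specified on profiles with at most one $\emptyset$. Common prior: types $t_i\sim F_i$ are independent across bidders. Interim utility: $V_i(\hat t_i;t_i)=\mathbb E[u_i(\mathbf x(\hat t_i,\mathbf t_{-i}),p_i(\hat t_i,\mathbf t_{-i});\mathbf t)\mid t_i]$ with $\mathbf t_{-i}\sim\prod_{j\ne i}F_j$ (others truthful), for $\hat t_i\in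 B_i$. BNIC: $V_i(t_i;t_i)\ge V_i(\hat t_i;t_i)$ for all $i$ and $t_i,\hat t_i\in T_i$. Interim IR: $V_i(t_i;t_i)\ge V_i(\emptyset;t_i)$ for all $i,t_i$. *)

theory Defs
  imports "HOL-Probability.Probability"
begin

text \<open>A type of bidder i is a vector
  t :: real^'n with t$i = v_i (own value) and t$j = eta_{j<-i} for j ~= i
  (the externality bidder i exerts on bidder j).  A bid is an option:
  None is the abstention bid (the empty bid), Some t a reported type.\<close>

type_synonym 'n btype = "real ^ 'n"
type_synonym 'n bid = "'n btype option"
type_synonym 'n mech = "('n \<Rightarrow> 'n bid) \<Rightarrow> 'n \<Rightarrow> real"

definition Tset :: "('n::finite \<Rightarrow> real) \<Rightarrow> ('n \<Rightarrow> real) \<Rightarrow> ('n \<Rightarrow> 'n \<Rightarrow> real)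
    \<Rightarrow> ('n \<Rightarrow> 'n \<Rightarrow> real) \<Rightarrow> 'n \<Rightarrow> 'n btype set" where
  "Tset lv uv le ue i = {t. lv i \<le> t $ i \<and> t $ i \<le> uv i \<and>
      (\<forall>j. j \<noteq> i \<longrightarrow> le j i \<le> t $ j \<and> t $ j \<le> ue j i)}"

definition util :: "'n::finite \<Rightarrow> ('n \<Rightarrow> real) \<Rightarrow> ('n \<Rightarrow> real) \<Rightarrow> ('n \<Rightarrow> 'n btype) \<Rightarrow> real" where
  "util i z p t = (t i $ i) * z i - (\<Sum>j\<in>UNIV - {i}. (t j $ i) * z j) - p i"

definition SW :: "('n::finite \<Rightarrow> real) \<Rightarrow> ('n \<Rightarrow> 'n btype) \<Rightarrow> real" where
  "SW z t = (\<Sum>i\<in>UNIV. (t i $ i - (\<Sum>j\<in>UNIV - {i}. t i $ j)) * z i)"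

definition tprof :: "'n \<Rightarrow> 'a \<Rightarrow> ('n \<Rightarrow> 'a) \<Rightarrow> 'n \<Rightarrow> 'a" where
  "tprof i t s = (\<lambda>j. if j = i then t else s j)"

definition bprof :: "'n::finite \<Rightarrow> 'n bid \<Rightarrow> ('n \<Rightarrow> 'n btype) \<Rightarrow> 'n \<Rightarrow> 'n bid" where
  "bprof i b s = (\<lambda>j. if j = i then b else Some (s j))"

definition interim :: "('n::finite \<Rightarrow> 'n btype measure) \<Rightarrow> 'n mech \<Rightarrow> 'n mech
    \<Rightarrow> 'n \<Rightarrow> 'n bid \<Rightarrow> 'n btype \<Rightarrow> real" where
  "interim F x p i b t =
     (\<integral>s. util i (x (bprof i b s)) (p (bprof i b s)) (tprof i t s) \<partial>(PiM (UNIV - {i}) F))"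

definition BNIC :: "('n::finite \<Rightarrow> 'n btype measure) \<Rightarrow> ('n \<Rightarrow> 'n btype set)
    \<Rightarrow> 'n mech \<Rightarrow> 'n mech \<Rightarrow> bool" where
  "BNIC F T x p \<longleftrightarrow> (\<forall>i t th. t \<in> T i \<longrightarrow> th \<in> T i \<longrightarrow>
      interim F x p i (Some th) t \<le> interim F x p i (Some t) t)"

definition interimIR :: "('n::finite \<Rightarrow> 'n btype measure) \<Rightarrow> ('n \<Rightarrow> 'n btype set)
    \<Rightarrow> 'n mech \<Rightarrow> 'n mech \<Rightarrow> bool" where
  "interimIR F T x p \<longleftrightarrow> (\<forall>i t. t \<in> T i \<longrightarrow>
      interim F x p i None t \<le> interim F x p i (Some t) t)"

definition is_mechanism :: "('n::finite) mech \<Rightarrow> 'n mech \<Rightarrow> bool" where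
  "is_mechanism x p \<longleftrightarrow> (\<forall>b i. 0 \<le> x b i \<and> x b i \<le> 1 \<and> 0 \<le> p b i \<and>
      (b i = None \<longrightarrow> x b i = 0 \<and> p b i = 0))"

definition regular_mech :: "('n::finite \<Rightarrow> 'n btype measure) \<Rightarrow> 'n mech \<Rightarrow> 'n mech \<Rightarrow> bool" where
  "regular_mech F x p \<longleftrightarrow>
     (\<forall>i. (\<lambda>t. x (\<lambda>j. Some (t j)) i) \<in> borel_measurable (PiM UNIV F)) \<and>
     (\<forall>i b j. (\<lambda>s. x (bprof i b s) j) \<in> borel_measurable (PiM (UNIV - {i}) F)) \<and>
     (\<forall>i b. integrable (PiM (UNIV - {i}) F) (\<lambda>s. p (bprof i b s) i))"

text \<open>m i j v is (a version of) E[eta_{j<-i} | v_i = v], i.e. E[t_i $ j | t_i $ i = v].\<close>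
definition cond_exp_version :: "('n::finite) btype measure \<Rightarrow> 'n \<Rightarrow> 'n \<Rightarrow> (real \<Rightarrow> real) \<Rightarrow> bool" where
  "cond_exp_version M i j f \<longleftrightarrow> f \<in> borel_measurable borel \<and>
     integrable M (\<lambda>t. f (t $ i)) \<and>
     (\<forall>A\<in>sets borel. (\<integral>t. indicator A (t $ i) * (t $ j) \<partial>M) =
                     (\<integral>t. indicator A (t $ i) * f (t $ i) \<partial>M))"

definition gfun :: "('n::finite \<Rightarrow> 'n \<Rightarrow> real \<Rightarrow> real) \<Rightarrow> 'n \<Rightarrow> real \<Rightarrow> real" where
  "gfun m i v = v - (\<Sum>j\<in>UNIV - {i}. m i j v)"

definition tau :: "('n::finite \<Rightarrow> 'n \<Rightarrow> real \<Rightarrow> real) \<Rightarrow> ('n \<Rightarrow> real) \<Rightarrow> ('n \<Rightarrow> real) \<Rightarrow> 'n \<Rightarrow> real" where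
  "tau m lv uv i = (let S = {v. lv i \<le> v \<and> v \<le> uv i \<and> 0 \<le> gfun m i v} in
                    if S = {} then uv i else Inf S)"

definition xabs :: "('n::finite \<Rightarrow> 'n \<Rightarrow> real \<Rightarrow> real) \<Rightarrow> 'n \<Rightarrow> 'n \<Rightarrow> real \<Rightarrow> real" where
  "xabs m i j v = (if (\<Sum>k\<in>UNIV - {i, j}. m j k v) \<le> v then 1 else 0)"

definition xopt :: "('n::finite \<Rightarrow> 'n \<Rightarrow> real \<Rightarrow> real) \<Rightarrow> 'n mech" where
  "xopt m b j =
     (case b j of None \<Rightarrow> 0
      | Some tj \<Rightarrow> if (\<exists>i. b i = None) then xabs m (SOME i. b i = None) j (tj $ j)
                  else (if 0 \<le> gfun m j (tj $ j) then 1 else 0))"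

definition Kconst :: "('n::finite \<Rightarrow> 'n btype measure) \<Rightarrow> ('n \<Rightarrow> 'n \<Rightarrow> real \<Rightarrow> real) \<Rightarrow> 'n \<Rightarrow> real" where
  "Kconst F m i = (\<Sum>j\<in>UNIV - {i}.
      \<integral>tj. (tj $ i) * (if 0 \<le> gfun m j (tj $ j) then 1 else 0) \<partial>F j)"

definition cempty :: "('n::finite \<Rightarrow> 'n btype measure) \<Rightarrow> ('n \<Rightarrow> 'n \<Rightarrow> real \<Rightarrow> real) \<Rightarrow> 'n \<Rightarrow> real" where
  "cempty F m i = - (\<Sum>j\<in>UNIV - {i}. \<integral>tj. (tj $ i) * xabs m i j (tj $ j) \<partial>F j)"

definition popt :: "('n::finite \<Rightarrow> 'n btype measure) \<Rightarrow> ('n \<Rightarrow> 'n \<Rightarrow> real \<Rightarrow> real)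
    \<Rightarrow> ('n \<Rightarrow> real) \<Rightarrow> ('n \<Rightarrow> real) \<Rightarrow> ('n \<Rightarrow> real) \<Rightarrow> 'n mech" where
  "popt F m lv uv C b i =
     (case b i of None \<Rightarrow> 0
      | Some ti \<Rightarrow> tau m lv uv i * xopt m b i - Kconst F m i - C i)"

end

theory Submission
  imports Defs
begin

text \<open>
  (a) If the others report truthfully, the externality payment of bidder i is a constant that
  exactly offsets, in expectation, the externalities she suffers; what remains of her interim
  utility is (v_i - tau_i) 1{g_i(reported value) >= 0} + C_i, which truthful reporting maximises
  because g_i is monotone with zero crossing tau_i. Abstaining yields c_i^empty <= C_i. With
  C_i = c_i^empty payments are nonnegative because removing i from the market only raises the
  others' allocations.

  (b) For any BNIC mechanism the interim utility is affine in the own value with slope the interim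
  allocation X_i, so incentive compatibility makes X_i monotone in v_i. As v_i has a density,
  X_i is then almost surely a function of v_i alone, and the tower property turns bidder i's
  contribution to expected welfare into E[g_i(v_i) X_i(v_i)], which is maximised pointwise by
  1{g_i(v_i) >= 0}.
\<close>

section \<open>Integrals over product measures\<close>

lemma integrable_bounded_mult:
  fixes f g :: "'a \<Rightarrow> real"
  assumes f: "integrable M f" and [measurable]: "g \<in> borel_measurable M" and g: "\<And>x. \<bar>g x\<bar> \<le> B"
  shows "integrable M (\<lambda>x. g x * f x)"
proof (rule Bochner_Integration.integrable_bound)
  show "integrable M (\<lambda>x. B * f x)" using f by simp
  have [measurable]: "f \<in> borel_measurable M" using f by auto
  show "(\<lambda>x. g x * f x) \<in> borel_measurable M" by measurable
  have "\<bar>g x\<bar> * \<bar>f x\<bar> \<le> \<bar>B\<bar> * \<bar>f x\<bar>" for x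
    using g[of x] by (intro mult_right_mono) auto
  then show "AE x in M. norm (g x * f x) \<le> norm (B * f x)" by (simp add: abs_mult)
qed

lemma integral_PiM_component:
  fixes f :: "'a \<Rightarrow> 'b::{banach, second_countable_topology}"
  assumes "\<And>j. j \<in> I \<Longrightarrow> prob_space (M j)" "i \<in> I" "f \<in> borel_measurable (M i)"
  shows "(\<integral>s. f (s i) \<partial>PiM I M) = integral\<^sup>L (M i) f"
proof -
  have "(\<integral>s. f (s i) \<partial>PiM I M) = integral\<^sup>L (distr (PiM I M) (M i) (\<lambda>s. s i)) f"
    using assms by (intro integral_distr[symmetric]) auto
  then show ?thesis using assms by (simp add: distr_PiM_component)
qed

lemma integrable_PiM_component:
  fixes f :: "'a \<Rightarrow> 'b::{banach, second_countable_topology}"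
  assumes "\<And>j. j \<in> I \<Longrightarrow> prob_space (M j)" "i \<in> I" "integrable (M i) f"
  shows "integrable (PiM I M) (\<lambda>s. f (s i))"
  using assms integrable_distr_eq[OF measurable_component_singleton[of i I M], of f]
  by (simp add: distr_PiM_component)

lemma integral_PiM_sum_components:
  fixes f :: "'i \<Rightarrow> 'a \<Rightarrow> real"
  assumes "\<And>j. j \<in> I \<Longrightarrow> prob_space (M j)" "J \<subseteq> I" "\<And>j. j \<in> J \<Longrightarrow> integrable (M j) (f j)"
  shows "integrable (PiM I M) (\<lambda>s. \<Sum>j\<in>J. f j (s j))"
    and "(\<integral>s. (\<Sum>j\<in>J. f j (s j)) \<partial>PiM I M) = (\<Sum>j\<in>J. integral\<^sup>L (M j) (f j))"
proof -
  have int: "integrable (PiM I M) (\<lambda>s. f j (s j))" if "j \<in> J" for j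
    using assms that by (intro integrable_PiM_component) auto
  then show "integrable (PiM I M) (\<lambda>s. \<Sum>j\<in>J. f j (s j))" by auto
  have "(\<integral>s. (\<Sum>j\<in>J. f j (s j)) \<partial>PiM I M) = (\<Sum>j\<in>J. \<integral>s. f j (s j) \<partial>PiM I M)"
    using int by (rule Bochner_Integration.integral_sum)
  also have "\<dots> = (\<Sum>j\<in>J. integral\<^sup>L (M j) (f j))"
    using assms by (intro sum.cong refl integral_PiM_component) auto
  finally show "(\<integral>s. (\<Sum>j\<in>J. f j (s j)) \<partial>PiM I M) = (\<Sum>j\<in>J. integral\<^sup>L (M j) (f j))" .
qed

lemma borel_measurable_integral_PiM_fun_upd:
  fixes f :: "_ \<Rightarrow> _::{banach, second_countable_topology}"
  assumes "sigma_finite_measure (PiM (I - {i}) M)" "i \<in> I" "f \<in> borel_measurable (PiM I M)"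
  shows "(\<lambda>a. \<integral>s. f (s(i := a)) \<partial>PiM (I - {i}) M) \<in> borel_measurable (M i)"
proof -
  have "(\<lambda>(a, s). s(i := a)) \<in> measurable (M i \<Otimes>\<^sub>M PiM (I - {i}) M) (PiM I M)"
    unfolding case_prod_beta using assms(2) by (intro measurable_fun_upd[where J="I - {i}"]) auto
  from measurable_comp[OF this assms(3)]
  have "(\<lambda>(a, s). f (s(i := a))) \<in> borel_measurable (M i \<Otimes>\<^sub>M PiM (I - {i}) M)"
    by (simp add: comp_def case_prod_beta)
  then show ?thesis by (rule sigma_finite_measure.borel_measurable_lebesgue_integral[OF assms(1)])
qed

lemma (in product_sigma_finite) integral_PiM_split_component:
  fixes f :: "_ \<Rightarrow> _::{banach, second_countable_topology}"
  assumes I: "finite I" "i \<in> I" and f: "integrable (PiM I M) f"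
  shows "(\<integral>s. f s \<partial>PiM I M) = (\<integral>a. (\<integral>s. f (s(i := a)) \<partial>PiM (I - {i}) M) \<partial>M i)"
proof -
  have "(\<integral>s. f s \<partial>PiM I M) = (\<integral>x. (\<integral>s. f (merge {i} (I - {i}) (x, s)) \<partial>PiM (I - {i}) M) \<partial>PiM {i} M)"
    using product_integral_fold[of "{i}" "I - {i}" f] I f by (simp add: insert_absorb)
  also have "\<dots> = (\<integral>x. (\<integral>s. f (s(i := x i)) \<partial>PiM (I - {i}) M) \<partial>PiM {i} M)"
  proof (intro Bochner_Integration.integral_cong refl)
    fix x s assume "s \<in> space (PiM (I - {i}) M)"
    then have "merge {i} (I - {i}) (x, s) = s(i := x i)"
      by (auto simp: merge_def fun_eq_iff space_PiM PiE_def extensional_def)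
    then show "f (merge {i} (I - {i}) (x, s)) = f (s(i := x i))" by simp
  qed
  also have "\<dots> = (\<integral>a. (\<integral>s. f (s(i := a)) \<partial>PiM (I - {i}) M) \<partial>M i)"
    using I f by (intro product_integral_singleton borel_measurable_integral_PiM_fun_upd sigma_finite) auto
  finally show ?thesis .
qed

section \<open>Monotone functions of a variable with a density\<close>

lemma countable_of_separated_gaps:
  fixes lo hi :: "real \<Rightarrow> real"
  assumes gap: "\<And>v. v \<in> D \<Longrightarrow> lo v < hi v"
    and separated: "\<And>v w. v \<in> D \<Longrightarrow> w \<in> D \<Longrightarrow> v < w \<Longrightarrow> hi v \<le> lo w"
  shows "countable D"
proof -
  define r where "r v = (SOME q. q \<in> \<rat> \<and> lo v < q \<and> q < hi v)" for v
  have r: "r v \<in> \<rat> \<and> lo v < r v \<and> r v < hi v" if "v \<in> D" for v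
    unfolding r_def by (rule someI_ex) (use gap[OF that] Rats_dense_in_real in blast)
  have less: "r v < r w" if "v \<in> D" "w \<in> D" "v < w" for v w
    using r[OF that(1)] r[OF that(2)] separated[OF that] by linarith
  have "inj_on r D"
  proof (rule inj_onI)
    fix v w assume "v \<in> D" "w \<in> D" "r v = r w"
    then show "v = w" using less[of v w] less[of w v] by (cases v w rule: linorder_cases) auto
  qed
  moreover have "countable (r ` D)"
    using r by (intro countable_subset[OF _ countable_rat]) auto
  ultimately show ?thesis by (blast intro: countable_image_inj_on)
qed
lemma AE_distributed_not_in_countable:
  assumes Y: "distributed M lborel Y f" and D: "countable D"
  shows "AE x in M. Y x \<notin> D"
proof (rule AE_I')
  have null: "D \<in> null_sets lborel" using D by (rule countable_imp_null_set_lborel)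
  have "emeasure M (Y -` D \<inter> space M) = (\<integral>\<^sup>+v. f v * indicator D v \<partial>lborel)"
    using Y null by (intro distributed_emeasure) auto
  also have "\<dots> = 0"
    using AE_not_in[OF null] by (subst nn_integral_cong_AE[where v="\<lambda>_. 0"]) (auto elim!: eventually_mono)
  finally have "emeasure M (Y -` D \<inter> space M) = 0" .
  moreover have "Y -` D \<inter> space M \<in> sets M"
    using null measurable_sets[OF distributed_measurable[OF Y], of D] by auto
  ultimately show "Y -` D \<inter> space M \<in> null_sets M"
    by (intro null_setsI)
qed auto
text \<open>The left and right envelopes phi and psi of X along Y can differ only at countably many
  jumps, and these form a null set because Y has a density.\<close>

lemma AE_eq_mono_comp_of_mono_along:
  fixes X Y :: "'a \<Rightarrow> real"
  assumes Y: "distributed M lborel Y f"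
    and S: "AE x in M. x \<in> S" and interval: "is_interval (Y ` S)"
    and X: "\<And>x. X x \<in> {0..1}"
    and mono: "\<And>a b. a \<in> S \<Longrightarrow> b \<in> S \<Longrightarrow> Y a < Y b \<Longrightarrow> X a \<le> X b"
  obtains \<phi> where "mono \<phi>" "\<And>v. \<phi> v \<in> {0..1}" "AE x in M. X x = \<phi> (Y x)"
proof -
  define L where "L v = insert 0 (X ` {b \<in> S. Y b < v})" for v
  define U where "U v = insert 1 (X ` {b \<in> S. v < Y b})" for v
  define \<phi> where "\<phi> v = Sup (L v)" for v
  define \<psi> where "\<psi> v = Inf (U v)" for v
  have bdd: "bdd_above (L v)" "bdd_below (U v)" for v
    unfolding L_def U_def using X by (auto intro!: bdd_aboveI[where M=1] bdd_belowI[where m=0])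
  have "mono \<phi>"
    unfolding mono_def \<phi>_def by (intro allI impI cSup_subset_mono bdd) (auto simp: L_def)
  moreover have "\<phi> v \<in> {0..1}" for v
  proof -
    have "0 \<le> \<phi> v" unfolding \<phi>_def by (rule cSup_upper[OF _ bdd(1)]) (simp add: L_def)
    moreover have "\<phi> v \<le> 1" unfolding \<phi>_def using X by (intro cSup_least) (auto simp: L_def)
    ultimately show ?thesis by simp
  qed
  moreover have below: "\<phi> (Y a) \<le> X a" if "a \<in> S" for a
    unfolding \<phi>_def using X that by (intro cSup_least) (auto simp: L_def intro: mono)
  have above: "X a \<le> \<psi> (Y a)" if "a \<in> S" for a
    unfolding \<psi>_def using X that by (intro cInf_greatest) (auto simp: U_def intro: mono)
  have separated: "\<psi> v \<le> \<phi> w" if "v \<in> Y ` S" "w \<in> Y ` S" "v < w" for v w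
  proof -
    have "v \<le> (v + w) / 2" "(v + w) / 2 \<le> w" using \<open>v < w\<close> by auto
    then have "(v + w) / 2 \<in> Y ` S" using interval that(1,2) unfolding is_interval_1 by blast
    then obtain c where c: "c \<in> S" "Y c = (v + w) / 2" by auto
    have "\<psi> v \<le> X c" unfolding \<psi>_def using c \<open>v < w\<close> by (intro cInf_lower bdd) (auto simp: U_def)
    also have "X c \<le> \<phi> w" unfolding \<phi>_def using c \<open>v < w\<close> by (intro cSup_upper bdd) (auto simp: L_def)
    finally show ?thesis .
  qed
  define D where "D = {v \<in> Y ` S. \<phi> v < \<psi> v}"
  have "countable D"
    by (rule countable_of_separated_gaps[of D \<phi> \<psi>]) (auto simp: D_def intro: separated)
  with Y have "AE x in M. Y x \<notin> D" by (rule AE_distributed_not_in_countable)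
  then have "AE x in M. X x = \<phi> (Y x)"
    using S
  proof eventually_elim
    case (elim x)
    then have "\<psi> (Y x) \<le> \<phi> (Y x)" by (auto simp: D_def)
    then show ?case using below[OF elim(2)] above[OF elim(2)] by simp
  qed
  ultimately show ?thesis using that by blast
qed
section \<open>Versions of conditional expectations\<close>

lemma integral_mult_cond_version:
  fixes Y Z :: "'a \<Rightarrow> real"
  assumes "prob_space M"
    and [measurable]: "Y \<in> borel_measurable M" "g \<in> borel_measurable borel" "\<phi> \<in> borel_measurable borel"
    and Z: "integrable M Z" and gY: "integrable M (\<lambda>x. g (Y x))"
    and version: "\<And>A. A \<in> sets borel \<Longrightarrow>
      (\<integral>x. indicator A (Y x) * Z x \<partial>M) = (\<integral>x. indicator A (Y x) * g (Y x) \<partial>M)"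
    and bounded: "\<And>v. \<bar>\<phi> v\<bar> \<le> B"
  shows "(\<integral>x. \<phi> (Y x) * Z x \<partial>M) = (\<integral>x. \<phi> (Y x) * g (Y x) \<partial>M)"
proof -
  have [measurable]: "Z \<in> borel_measurable M" using Z by auto
  define S where "S = vimage_algebra (space M) Y borel"
  have subalg: "subalgebra M S"
    unfolding subalgebra_def S_def using sets_image_in_sets[OF refl assms(2)] by simp
  interpret sigma_finite_subalgebra M S
    by (rule sigma_finite_subalgebra.intro[OF subalg])
       (rule prob_space_imp_sigma_finite[OF prob_space_restr_to_subalg[OF subalg assms(1)]])
  have YS: "Y \<in> measurable S borel"
    unfolding S_def by (rule measurable_vimage_algebra1) simp
  have [measurable]: "(\<lambda>x. h (Y x)) \<in> borel_measurable S" if [measurable]: "h \<in> borel_measurable borel" for h :: "real \<Rightarrow> real"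
    using measurable_comp[OF YS that] by (simp add: comp_def)
  have cond: "AE x in M. real_cond_exp M S Z x = g (Y x)"
  proof (rule real_cond_exp_charact)
    fix A assume "A \<in> sets S"
    then obtain B where B: "B \<in> sets borel" "A = Y -` B \<inter> space M"
      unfolding S_def by (subst (asm) sets_vimage_algebra2) auto
    then have "indicator A x = (indicator B (Y x) :: real)" if "x \<in> space M" for x
      using that by (auto simp: indicator_def)
    then have "(\<integral>x \<in> A. h x \<partial>M) = (\<integral>x. indicator B (Y x) * h x \<partial>M)" for h :: "'a \<Rightarrow> real"
      unfolding set_lebesgue_integral_def by (intro Bochner_Integration.integral_cong) simp_all
    then show "(\<integral>x \<in> A. Z x \<partial>M) = (\<integral>x \<in> A. g (Y x) \<partial>M)"
      using version[OF B(1)] by simp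
  qed (use Z gY in auto)
  have "integrable M (\<lambda>x. \<phi> (Y x) * Z x)"
    using Z bounded by (intro integrable_bounded_mult) auto
  then have "(\<integral>x. \<phi> (Y x) * Z x \<partial>M) = (\<integral>x. \<phi> (Y x) * real_cond_exp M S Z x \<partial>M)"
    by (intro real_cond_exp_intg(2)[symmetric]) auto
  also have "\<dots> = (\<integral>x. \<phi> (Y x) * g (Y x) \<partial>M)"
    using cond by (intro integral_cong_AE) (auto elim!: eventually_mono)
  finally show ?thesis .
qed

lemma AE_cond_version_nonneg:
  fixes Y Z :: "'a \<Rightarrow> real"
  assumes [measurable]: "Y \<in> borel_measurable M" "g \<in> borel_measurable borel"
    and gY: "integrable M (\<lambda>x. g (Y x))" and Z: "AE x in M. 0 \<le> Z x"
    and version: "\<And>A. A \<in> sets borel \<Longrightarrow>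
      (\<integral>x. indicator A (Y x) * Z x \<partial>M) = (\<integral>x. indicator A (Y x) * g (Y x) \<partial>M)"
  shows "AE x in M. 0 \<le> g (Y x)"
proof -
  define A where "A = {v. g v < 0}"
  have A[measurable]: "A \<in> sets borel" unfolding A_def by measurable
  let ?h = "\<lambda>x. - (indicator A (Y x) * g (Y x))"
  have nonneg: "0 \<le> ?h x" for x by (auto simp: A_def indicator_def)
  have "0 \<le> (\<integral>x. indicator A (Y x) * Z x \<partial>M)"
    using Z by (intro integral_nonneg_AE) (auto elim!: eventually_mono)
  then have "integral\<^sup>L M ?h = 0"
    using version[OF A] Bochner_Integration.integral_nonneg[of M ?h] nonneg by simp
  moreover have "integrable M ?h"
    by (rule Bochner_Integration.integrable_bound[OF gY]) (auto simp: indicator_def)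
  ultimately have "AE x in M. ?h x = 0"
    using integral_nonneg_eq_0_iff_AE nonneg by blast
  then show ?thesis by eventually_elim (auto simp: A_def indicator_def split: if_splits)
qed

section \<open>The mechanism and its optimality\<close>

definition opt_alloc :: "('n::finite \<Rightarrow> 'n \<Rightarrow> real \<Rightarrow> real) \<Rightarrow> 'n \<Rightarrow> real \<Rightarrow> real" where
  "opt_alloc m i v = (if 0 \<le> gfun m i v then 1 else 0)"

lemma bprof_self[simp]: "bprof i b s i = b"
  by (simp add: bprof_def)

lemma bprof_Some_eq_fun_upd: "bprof i (Some a) s = (\<lambda>j. Some ((s(i := a)) j))"
  by (auto simp: bprof_def)

lemma tprof_self[simp]: "tprof i t s i = t"
  by (simp add: tprof_def)

lemma xopt_truthful: "xopt m (\<lambda>j. Some (t j)) i = opt_alloc m i (t i $ i)"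
  by (simp add: xopt_def opt_alloc_def)

lemma xopt_bprof_Some: "xopt m (bprof i (Some b) s) j = opt_alloc m j ((if j = i then b else s j) $ j)"
  by (auto simp: xopt_def bprof_def opt_alloc_def)

lemma xopt_bprof_None: "j \<noteq> i \<Longrightarrow> xopt m (bprof i None s) j = xabs m i j (s j $ j)"
proof -
  assume "j \<noteq> i"
  moreover have "(SOME k. bprof i None s k = None) = i"
    by (rule some_equality) (auto simp: bprof_def split: if_splits)
  ultimately show ?thesis by (auto simp: xopt_def bprof_def)
qed

lemma opt_alloc_le_xabs:
  assumes "i \<noteq> j" "0 \<le> m j i v"
  shows "opt_alloc m j v \<le> xabs m i j v"
proof -
  have "UNIV - {j} = insert i (UNIV - {i, j})" using assms(1) by auto
  then have "(\<Sum>k\<in>UNIV - {j}. m j k v) = m j i v + (\<Sum>k\<in>UNIV - {i, j}. m j k v)" by simp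
  then show ?thesis using assms(2) by (auto simp: opt_alloc_def xabs_def gfun_def)
qed

lemma lower_le_tau: "lv i \<le> uv i \<Longrightarrow> lv i \<le> tau m lv uv i"
  unfolding tau_def Let_def by (auto intro!: cInf_greatest)

lemma tau_le_of_gfun_nonneg:
  assumes "v \<in> {lv i..uv i}" "0 \<le> gfun m i v"
  shows "tau m lv uv i \<le> v"
proof -
  have "v \<in> {v. lv i \<le> v \<and> v \<le> uv i \<and> 0 \<le> gfun m i v}" using assms by simp
  then show ?thesis unfolding tau_def Let_def by (auto intro!: cInf_lower bdd_belowI[where m="lv i"])
qed

lemma le_tau_of_gfun_neg:
  assumes mono: "mono_on {lv i..uv i} (gfun m i)" and v: "v \<in> {lv i..uv i}" and neg: "gfun m i v < 0"
  shows "v \<le> tau m lv uv i"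
proof -
  define S where "S = {v. lv i \<le> v \<and> v \<le> uv i \<and> 0 \<le> gfun m i v}"
  have "v \<le> s" if "s \<in> S" for s
  proof (rule ccontr)
    assume "\<not> v \<le> s"
    then have "gfun m i s \<le> gfun m i v" using that v by (intro mono_onD[OF mono]) (auto simp: S_def)
    with that neg show False by (simp add: S_def)
  qed
  then show ?thesis using v unfolding tau_def Let_def S_def[symmetric] by (auto intro: cInf_greatest)
qed

lemma threshold_surplus:
  assumes "mono_on {lv i..uv i} (gfun m i)" "v \<in> {lv i..uv i}"
  shows "(v - tau m lv uv i) * opt_alloc m i v = max 0 (v - tau m lv uv i)"
  using assms tau_le_of_gfun_nonneg[of v lv i uv m] le_tau_of_gfun_neg[of lv i uv m v]
  by (auto simp: opt_alloc_def)

definition social_value :: "'n::finite \<Rightarrow> 'n btype \<Rightarrow> real" where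
  "social_value i t = t $ i - (\<Sum>j\<in>UNIV - {i}. t $ j)"

lemma SW_eq_sum_social_value: "SW z t = (\<Sum>i\<in>UNIV. z i * social_value i (t i))"
  by (simp add: SW_def social_value_def mult.commute)

definition interim_alloc :: "('n::finite \<Rightarrow> 'n btype measure) \<Rightarrow> 'n mech \<Rightarrow> 'n \<Rightarrow> 'n btype \<Rightarrow> real" where
  "interim_alloc F x i b = (\<integral>s. x (bprof i (Some b) s) i \<partial>PiM (UNIV - {i}) F)"

locale common_prior =
  fixes F :: "'n::finite \<Rightarrow> (real ^ 'n) measure"
    and lv uv :: "'n \<Rightarrow> real"
    and le ue :: "'n \<Rightarrow> 'n \<Rightarrow> real"
    and m :: "'n \<Rightarrow> 'n \<Rightarrow> real \<Rightarrow> real"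
  assumes bounds_v: "\<And>i. 0 \<le> lv i \<and> lv i \<le> uv i"
    and bounds_eta: "\<And>i j. 0 \<le> le i j \<and> le i j \<le> ue i j"
    and prob: "\<And>i. prob_space (F i)"
    and sets_F[measurable_cong]: "\<And>i. sets (F i) = sets borel"
    and support: "\<And>i. AE t in F i. t \<in> Tset lv uv le ue i"
    and condexp: "\<And>i j. j \<noteq> i \<Longrightarrow> cond_exp_version (F i) i j (m i j)"
begin

abbreviation T :: "'n \<Rightarrow> 'n btype set" where
  "T \<equiv> Tset lv uv le ue"

lemma prob_space_PiM_F: "prob_space (PiM I F)"
  by (intro prob_space_PiM prob)

lemma cond_exp_measurable[measurable]: "k \<noteq> j \<Longrightarrow> m j k \<in> borel_measurable borel"
  using condexp[of k j] by (simp add: cond_exp_version_def)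

lemma gfun_measurable[measurable]: "gfun m j \<in> borel_measurable borel"
  unfolding gfun_def by measurable

lemma opt_alloc_measurable[measurable]: "opt_alloc m j \<in> borel_measurable borel"
  unfolding opt_alloc_def by measurable

lemma social_value_measurable[measurable]: "social_value i \<in> borel_measurable borel"
  unfolding social_value_def by measurable

lemma Tset_coordinate_nonneg: "t \<in> T j \<Longrightarrow> 0 \<le> t $ k"
  using bounds_v[of j] bounds_eta[of k j] by (cases "k = j") (auto simp: Tset_def)

lemma Tset_coordinate_bound: "t \<in> T j \<Longrightarrow> \<bar>t $ k\<bar> \<le> uv j + ue k j"
  using bounds_v[of j] bounds_eta[of k j] by (cases "k = j") (auto simp: Tset_def)

lemma value_image_Tset: "(\<lambda>t. t $ i) ` T i = {lv i..uv i}"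
proof (intro equalityI subsetI)
  fix v assume "v \<in> {lv i..uv i}"
  then have "(\<chi> k. if k = i then v else le k i) \<in> T i"
    using bounds_eta by (auto simp: Tset_def)
  then show "v \<in> (\<lambda>t. t $ i) ` T i" by (rule rev_image_eqI) simp
qed (auto simp: Tset_def)

lemma integrable_coordinate: "integrable (F j) (\<lambda>t. t $ k)"
  using support[of j] Tset_coordinate_bound
  by (intro finite_measure.integrable_const_bound[OF prob_space.finite_measure[OF prob],
        where B="uv j + ue k j"]) (auto elim!: eventually_mono)

lemma integrable_coordinate_mult:
  assumes [measurable]: "g \<in> borel_measurable borel" and "\<And>v. \<bar>g v\<bar> \<le> 1"
  shows "integrable (F j) (\<lambda>t. t $ k * g (t $ j))"
  using integrable_bounded_mult[of "F j" "\<lambda>t. t $ k" "\<lambda>t. g (t $ j)" 1] integrable_coordinate assms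
  by (simp add: mult.commute)

lemma integrable_social_value: "integrable (F i) (social_value i)"
  unfolding social_value_def using integrable_coordinate by auto

lemma cond_version_coordinate:
  assumes "k \<noteq> i" "\<phi> \<in> borel_measurable borel" "\<And>v. \<bar>\<phi> v\<bar> \<le> B"
  shows "(\<integral>t. \<phi> (t $ i) * t $ k \<partial>F i) = (\<integral>t. \<phi> (t $ i) * m i k (t $ i) \<partial>F i)"
proof -
  have [measurable]: "m i k \<in> borel_measurable borel" using assms(1) by measurable
  have "cond_exp_version (F i) i k (m i k)" using condexp assms(1) by auto
  then show ?thesis unfolding cond_exp_version_def
    by (intro integral_mult_cond_version[OF prob _ _ assms(2) integrable_coordinate _ _ assms(3)]) simp_all
qed

lemma AE_coordinate_nonneg: "AE t in F j. 0 \<le> t $ k"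
  using support[of j] by eventually_elim (rule Tset_coordinate_nonneg)

lemma cond_version_nonneg:
  assumes "k \<noteq> j" shows "AE t in F j. 0 \<le> m j k (t $ j)"
proof (rule AE_cond_version_nonneg[OF _ cond_exp_measurable[OF assms] _ AE_coordinate_nonneg])
  show "integrable (F j) (\<lambda>t. m j k (t $ j))"
    and "\<And>A. A \<in> sets borel \<Longrightarrow>
      (\<integral>t. indicator A (t $ j) * t $ k \<partial>F j) = (\<integral>t. indicator A (t $ j) * m j k (t $ j) \<partial>F j)"
    using condexp[OF assms] by (simp_all add: cond_exp_version_def)
qed measurable

lemma integral_const_minus_others:
  fixes f :: "'n \<Rightarrow> 'n btype \<Rightarrow> real"
  assumes "\<And>j. j \<noteq> i \<Longrightarrow> integrable (F j) (f j)"
  shows "(\<integral>s. c - (\<Sum>j\<in>UNIV - {i}. f j (s j)) \<partial>PiM (UNIV - {i}) F)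
       = c - (\<Sum>j\<in>UNIV - {i}. integral\<^sup>L (F j) (f j))"
proof -
  interpret P: prob_space "PiM (UNIV - {i}) F" by (rule prob_space_PiM_F)
  note sums = integral_PiM_sum_components[of "UNIV - {i}" F "UNIV - {i}" f]
  show ?thesis
    using assms prob sums by (subst Bochner_Integration.integral_diff) (auto simp: P.prob_space)
qed

lemma interim_xopt_Some:
  "interim F (xopt m) (popt F m lv uv C) i (Some b) t = (t $ i - tau m lv uv i) * opt_alloc m i (b $ i) + C i"
proof -
  define c where "c = (t $ i - tau m lv uv i) * opt_alloc m i (b $ i) + C i + Kconst F m i"
  define f where "f j = (\<lambda>a :: 'n btype. a $ i * opt_alloc m j (a $ j))" for j
  have "util i (xopt m (bprof i (Some b) s)) (popt F m lv uv C (bprof i (Some b) s)) (tprof i t s)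
      = c - (\<Sum>j\<in>UNIV - {i}. f j (s j))" for s
  proof -
    have "(\<Sum>j\<in>UNIV - {i}. tprof i t s j $ i * xopt m (bprof i (Some b) s) j) = (\<Sum>j\<in>UNIV - {i}. f j (s j))"
      by (intro sum.cong) (auto simp: xopt_bprof_Some f_def tprof_def)
    moreover have "xopt m (bprof i (Some b) s) i = opt_alloc m i (b $ i)"
      by (simp add: xopt_bprof_Some)
    ultimately show ?thesis by (simp add: util_def popt_def c_def tprof_def algebra_simps)
  qed
  then have "interim F (xopt m) (popt F m lv uv C) i (Some b) t
      = (\<integral>s. c - (\<Sum>j\<in>UNIV - {i}. f j (s j)) \<partial>PiM (UNIV - {i}) F)"
    by (simp add: interim_def)
  also have "\<dots> = c - (\<Sum>j\<in>UNIV - {i}. integral\<^sup>L (F j) (f j))"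
    by (rule integral_const_minus_others) (auto simp: f_def opt_alloc_def intro!: integrable_coordinate_mult)
  also have "(\<Sum>j\<in>UNIV - {i}. integral\<^sup>L (F j) (f j)) = Kconst F m i"
    by (simp add: Kconst_def f_def opt_alloc_def)
  finally show ?thesis by (simp add: c_def)
qed

lemma interim_xopt_None: "interim F (xopt m) (popt F m lv uv C) i None t = cempty F m i"
proof -
  define f where "f j = (\<lambda>a :: 'n btype. a $ i * xabs m i j (a $ j))" for j
  have "util i (xopt m (bprof i None s)) (popt F m lv uv C (bprof i None s)) (tprof i t s)
      = 0 - (\<Sum>j\<in>UNIV - {i}. f j (s j))" for s
  proof -
    have "(\<Sum>j\<in>UNIV - {i}. tprof i t s j $ i * xopt m (bprof i None s) j) = (\<Sum>j\<in>UNIV - {i}. f j (s j))"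
      by (intro sum.cong) (auto simp: xopt_bprof_None f_def tprof_def)
    then show ?thesis by (simp add: util_def popt_def xopt_def)
  qed
  then have "interim F (xopt m) (popt F m lv uv C) i None t
      = (\<integral>s. 0 - (\<Sum>j\<in>UNIV - {i}. f j (s j)) \<partial>PiM (UNIV - {i}) F)"
    by (simp add: interim_def)
  also have "\<dots> = 0 - (\<Sum>j\<in>UNIV - {i}. integral\<^sup>L (F j) (f j))"
    by (rule integral_const_minus_others) (auto simp: f_def xabs_def intro!: integrable_coordinate_mult)
  finally show ?thesis by (simp add: cempty_def f_def)
qed

lemma xopt_popt_BNIC_interimIR:
  assumes mono: "\<And>i. mono_on {lv i..uv i} (gfun m i)" and C: "\<And>i. cempty F m i \<le> C i"
  shows "BNIC F T (xopt m) (popt F m lv uv C)" and "interimIR F T (xopt m) (popt F m lv uv C)"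
proof -
  have truthful: "interim F (xopt m) (popt F m lv uv C) i (Some t) t = max 0 (t $ i - tau m lv uv i) + C i"
    if "t \<in> T i" for i t
    using that mono[of i] threshold_surplus[of lv i uv m "t $ i"] by (simp add: interim_xopt_Some Tset_def)
  show "BNIC F T (xopt m) (popt F m lv uv C)"
    unfolding BNIC_def
  proof (intro allI impI)
    fix i t b assume "t \<in> T i" "b \<in> T i"
    have "(t $ i - tau m lv uv i) * opt_alloc m i (b $ i) \<le> max 0 (t $ i - tau m lv uv i)"
      by (simp add: opt_alloc_def)
    then show "interim F (xopt m) (popt F m lv uv C) i (Some b) t \<le> interim F (xopt m) (popt F m lv uv C) i (Some t) t"
      by (subst truthful[OF \<open>t \<in> T i\<close>]) (simp add: interim_xopt_Some)
  qed
  show "interimIR F T (xopt m) (popt F m lv uv C)"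
    unfolding interimIR_def
  proof (intro allI impI)
    fix i t assume "t \<in> T i"
    show "interim F (xopt m) (popt F m lv uv C) i None t \<le> interim F (xopt m) (popt F m lv uv C) i (Some t) t"
      using C[of i] by (subst truthful[OF \<open>t \<in> T i\<close>]) (simp add: interim_xopt_None)
  qed
qed

text \<open>Removing i's externality from the others' thresholds can only raise their allocations.\<close>

lemma Kconst_le_minus_cempty: "Kconst F m i \<le> - cempty F m i"
  unfolding Kconst_def cempty_def minus_minus opt_alloc_def[symmetric]
proof (rule sum_mono)
  fix j assume "j \<in> UNIV - {i}"
  then have ij: "i \<noteq> j" by auto
  show "(\<integral>t. t $ i * opt_alloc m j (t $ j) \<partial>F j) \<le> (\<integral>t. t $ i * xabs m i j (t $ j) \<partial>F j)"
  proof (rule integral_mono_AE)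
    show "AE t in F j. t $ i * opt_alloc m j (t $ j) \<le> t $ i * xabs m i j (t $ j)"
      using AE_coordinate_nonneg[where j=j and k=i] cond_version_nonneg[OF ij]
      by eventually_elim (auto intro!: mult_left_mono opt_alloc_le_xabs ij)
  qed (auto simp: opt_alloc_def xabs_def intro!: integrable_coordinate_mult)
qed

lemma popt_cempty_nonneg: "0 \<le> popt F m lv uv (cempty F m) (\<lambda>j. Some (t j)) i"
proof -
  have "0 \<le> tau m lv uv i" using lower_le_tau[of lv i uv m] bounds_v[of i] by linarith
  then have "0 \<le> tau m lv uv i * xopt m (\<lambda>j. Some (t j)) i"
    by (simp add: xopt_truthful opt_alloc_def)
  then show ?thesis using Kconst_le_minus_cempty[of i] by (simp add: popt_def)
qed

lemma integrable_mult_social_value: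
  assumes "g \<in> borel_measurable borel" "\<And>a. \<bar>g a\<bar> \<le> 1"
  shows "integrable (F i) (\<lambda>t. g t * social_value i t)"
  using assms by (intro integrable_bounded_mult integrable_social_value) auto

text \<open>Tower property: g_i(v_i) is the conditional expectation of social_value i given v_i.\<close>

lemma integral_mult_social_value_eq_gfun:
  assumes [measurable]: "\<phi> \<in> borel_measurable borel" and bounded: "\<And>v. \<bar>\<phi> v\<bar> \<le> 1"
  shows "integrable (F i) (\<lambda>t. \<phi> (t $ i) * gfun m i (t $ i))"
    and "(\<integral>t. \<phi> (t $ i) * social_value i t \<partial>F i) = (\<integral>t. \<phi> (t $ i) * gfun m i (t $ i) \<partial>F i)"
proof -
  let ?K = "UNIV - {i}"
  have int_coord: "integrable (F i) (\<lambda>t. \<phi> (t $ i) * t $ k)" for k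
    using bounded by (intro integrable_bounded_mult integrable_coordinate) auto
  have int_cond: "integrable (F i) (\<lambda>t. \<phi> (t $ i) * m i k (t $ i))" if "k \<in> ?K" for k
    using bounded condexp[of k i] that by (intro integrable_bounded_mult) (auto simp: cond_exp_version_def)
  have sv: "\<phi> (t $ i) * social_value i t = \<phi> (t $ i) * t $ i - (\<Sum>k\<in>?K. \<phi> (t $ i) * t $ k)" for t
    by (simp add: social_value_def sum_distrib_left algebra_simps)
  have g: "\<phi> (t $ i) * gfun m i (t $ i) = \<phi> (t $ i) * t $ i - (\<Sum>k\<in>?K. \<phi> (t $ i) * m i k (t $ i))" for t
    by (simp add: gfun_def sum_distrib_left algebra_simps)
  have int_sum_coord: "integrable (F i) (\<lambda>t. \<Sum>k\<in>?K. \<phi> (t $ i) * t $ k)"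
    by (intro Bochner_Integration.integrable_sum int_coord)
  have int_sum_cond: "integrable (F i) (\<lambda>t. \<Sum>k\<in>?K. \<phi> (t $ i) * m i k (t $ i))"
    by (intro Bochner_Integration.integrable_sum int_cond)
  show "integrable (F i) (\<lambda>t. \<phi> (t $ i) * gfun m i (t $ i))"
    unfolding g using int_coord int_sum_cond by (rule Bochner_Integration.integrable_diff)
  have "(\<integral>t. \<phi> (t $ i) * social_value i t \<partial>F i)
      = (\<integral>t. \<phi> (t $ i) * t $ i \<partial>F i) - (\<Sum>k\<in>?K. \<integral>t. \<phi> (t $ i) * t $ k \<partial>F i)"
    unfolding sv Bochner_Integration.integral_diff[OF int_coord int_sum_coord]
    by (simp add: Bochner_Integration.integral_sum[OF int_coord])
  also have "(\<Sum>k\<in>?K. \<integral>t. \<phi> (t $ i) * t $ k \<partial>F i) = (\<Sum>k\<in>?K. \<integral>t. \<phi> (t $ i) * m i k (t $ i) \<partial>F i)"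
    using bounded by (intro sum.cong refl cond_version_coordinate) auto
  also have "(\<integral>t. \<phi> (t $ i) * t $ i \<partial>F i) - \<dots> = (\<integral>t. \<phi> (t $ i) * gfun m i (t $ i) \<partial>F i)"
    unfolding g Bochner_Integration.integral_diff[OF int_coord int_sum_cond]
    using int_cond by (simp add: Bochner_Integration.integral_sum[where f="\<lambda>k t. \<phi> (t $ i) * m i k (t $ i)"])
  finally show "(\<integral>t. \<phi> (t $ i) * social_value i t \<partial>F i) = (\<integral>t. \<phi> (t $ i) * gfun m i (t $ i) \<partial>F i)" .
qed

lemma integral_mult_social_value_le_opt_alloc:
  assumes meas: "\<phi> \<in> borel_measurable borel" and range: "\<And>v. \<phi> v \<in> {0..1}"
  shows "(\<integral>t. \<phi> (t $ i) * social_value i t \<partial>F i) \<le> (\<integral>t. opt_alloc m i (t $ i) * social_value i t \<partial>F i)"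
proof -
  have bounded: "\<bar>\<phi> v\<bar> \<le> 1" for v using range[of v] by auto
  have pointwise: "\<phi> v * gfun m i v \<le> opt_alloc m i v * gfun m i v" for v
    using range[of v] mult_left_le_one_le[of "gfun m i v" "\<phi> v"] mult_nonneg_nonpos[of "\<phi> v" "gfun m i v"]
    by (auto simp: opt_alloc_def)
  have "(\<integral>t. \<phi> (t $ i) * social_value i t \<partial>F i) = (\<integral>t. \<phi> (t $ i) * gfun m i (t $ i) \<partial>F i)"
    by (rule integral_mult_social_value_eq_gfun(2)[OF meas bounded])
  also have "\<dots> \<le> (\<integral>t. opt_alloc m i (t $ i) * gfun m i (t $ i) \<partial>F i)"
    using pointwise bounded
    by (intro integral_mono integral_mult_social_value_eq_gfun(1) meas) (auto simp: opt_alloc_def)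
  also have "\<dots> = (\<integral>t. opt_alloc m i (t $ i) * social_value i t \<partial>F i)"
    by (rule integral_mult_social_value_eq_gfun(2)[symmetric]) (auto simp: opt_alloc_def)
  finally show ?thesis .
qed

context
  fixes x p :: "'n mech"
  assumes mech: "is_mechanism x p" and reg: "regular_mech F x p"
begin

lemma alloc_range: "x b j \<in> {0..1}"
  using mech by (simp add: is_mechanism_def)

lemma interim_alloc_range: "interim_alloc F x i b \<in> {0..1}"
proof -
  interpret P: prob_space "PiM (UNIV - {i}) F" by (rule prob_space_PiM_F)
  have "interim_alloc F x i b \<le> (\<integral>s. 1 \<partial>PiM (UNIV - {i}) F)"
    unfolding interim_alloc_def using reg alloc_range
    by (intro integral_mono P.integrable_const_bound[where B=1]) (auto simp: regular_mech_def)
  moreover have "0 \<le> interim_alloc F x i b"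
    unfolding interim_alloc_def using alloc_range by (intro Bochner_Integration.integral_nonneg) auto
  ultimately show ?thesis by (simp add: P.prob_space)
qed

lemma interim_alloc_measurable[measurable]: "interim_alloc F x i \<in> borel_measurable (F i)"
proof -
  have "(\<lambda>a. \<integral>s. x (\<lambda>j. Some ((s(i := a)) j)) i \<partial>PiM (UNIV - {i}) F) \<in> borel_measurable (F i)"
    using reg prob_space_imp_sigma_finite[OF prob_space_PiM_F]
    by (intro borel_measurable_integral_PiM_fun_upd) (auto simp: regular_mech_def)
  then show ?thesis by (simp add: interim_alloc_def[abs_def] bprof_Some_eq_fun_upd)
qed

lemma interim_affine: "interim F x p i (Some b) a = a $ i * interim_alloc F x i b + interim F x p i (Some b) 0"
proof -
  let ?P = "PiM (UNIV - {i}) F" and ?B = "bprof i (Some b)"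
  have others: "(\<Sum>j\<in>UNIV - {i}. tprof i t s j $ i * x (?B s) j) = (\<Sum>j\<in>UNIV - {i}. x (?B s) j * s j $ i)"
    for t s by (intro sum.cong) (auto simp: tprof_def)
  have "integrable ?P (\<lambda>s. x (?B s) j * s j $ i)" if "j \<in> UNIV - {i}" for j
    using reg alloc_range that integrable_coordinate[of j i]
    by (intro integrable_bounded_mult[where B=1] integrable_PiM_component prob) (auto simp: regular_mech_def)
  then have "integrable ?P (\<lambda>s. util i (x (?B s)) (p (?B s)) (tprof i 0 s))"
    using reg unfolding util_def others tprof_self regular_mech_def
    by (intro Bochner_Integration.integrable_diff Bochner_Integration.integrable_sum) auto
  moreover have "integrable ?P (\<lambda>s. x (?B s) i)"
    using reg alloc_range
    by (intro finite_measure.integrable_const_bound[OF prob_space.finite_measure[OF prob_space_PiM_F], where B=1])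
       (auto simp: regular_mech_def)
  moreover have "util i (x (?B s)) (p (?B s)) (tprof i a s)
      = a $ i * x (?B s) i + util i (x (?B s)) (p (?B s)) (tprof i 0 s)" for s
    unfolding util_def others tprof_self by simp
  ultimately show ?thesis
    by (simp add: interim_def interim_alloc_def)
qed

lemma interim_alloc_mono:
  assumes "BNIC F T x p" "a \<in> T i" "b \<in> T i" "a $ i < b $ i"
  shows "interim_alloc F x i a \<le> interim_alloc F x i b"
proof (rule ccontr)
  assume "\<not> ?thesis"
  then have "0 < (b $ i - a $ i) * (interim_alloc F x i a - interim_alloc F x i b)"
    using assms(4) by (intro mult_pos_pos) auto
  moreover have "interim F x p i (Some a) b \<le> interim F x p i (Some b) b"
    and "interim F x p i (Some b) a \<le> interim F x p i (Some a) a"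
    using assms(1-3) by (auto simp: BNIC_def)
  ultimately show False
    by (simp add: interim_affine[of _ _ a] interim_affine[of _ _ b] algebra_simps)
qed

lemma integral_alloc_social_value:
  "integrable (PiM UNIV F) (\<lambda>t. x (\<lambda>j. Some (t j)) i * social_value i (t i))"
  "(\<integral>t. x (\<lambda>j. Some (t j)) i * social_value i (t i) \<partial>PiM UNIV F)
     = (\<integral>a. interim_alloc F x i a * social_value i a \<partial>F i)"
proof -
  interpret product_sigma_finite F
    by (simp add: product_sigma_finite_def prob_space_imp_sigma_finite[OF prob])
  show int: "integrable (PiM UNIV F) (\<lambda>t. x (\<lambda>j. Some (t j)) i * social_value i (t i))"
    using reg alloc_range integrable_social_value[of i]
    by (intro integrable_bounded_mult[where B=1] integrable_PiM_component prob) (auto simp: regular_mech_def)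
  have "(\<integral>t. x (\<lambda>j. Some (t j)) i * social_value i (t i) \<partial>PiM UNIV F)
      = (\<integral>a. (\<integral>s. x (bprof i (Some a) s) i * social_value i a \<partial>PiM (UNIV - {i}) F) \<partial>F i)"
    by (subst integral_PiM_split_component[where i=i, OF _ _ int]) (simp_all add: bprof_Some_eq_fun_upd)
  then show "(\<integral>t. x (\<lambda>j. Some (t j)) i * social_value i (t i) \<partial>PiM UNIV F)
     = (\<integral>a. interim_alloc F x i a * social_value i a \<partial>F i)"
    by (simp add: interim_alloc_def)
qed

lemma integral_interim_alloc_le_opt_alloc:
  assumes "BNIC F T x p" and density: "distributed (F i) lborel (\<lambda>t. t $ i) f"
  shows "(\<integral>a. interim_alloc F x i a * social_value i a \<partial>F i)
    \<le> (\<integral>a. opt_alloc m i (a $ i) * social_value i a \<partial>F i)"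
proof -
  obtain \<phi> where mono: "mono \<phi>" and range: "\<And>v. \<phi> v \<in> {0..1}"
    and ae: "AE a in F i. interim_alloc F x i a = \<phi> (a $ i)"
    by (rule AE_eq_mono_comp_of_mono_along[where X="interim_alloc F x i", OF density support[of i]])
       (use interim_alloc_range[of i] in \<open>auto simp: value_image_Tset interim_alloc_mono[OF assms(1)]\<close>)
  from mono have meas[measurable]: "\<phi> \<in> borel_measurable borel" by (rule borel_measurable_mono)
  have "(\<integral>a. interim_alloc F x i a * social_value i a \<partial>F i) = (\<integral>a. \<phi> (a $ i) * social_value i a \<partial>F i)"
  proof (rule integral_cong_AE)
    show "(\<lambda>a. interim_alloc F x i a * social_value i a) \<in> borel_measurable (F i)"
      and "(\<lambda>a. \<phi> (a $ i) * social_value i a) \<in> borel_measurable (F i)"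
      by measurable
    show "AE a in F i. interim_alloc F x i a * social_value i a = \<phi> (a $ i) * social_value i a"
      using ae by eventually_elim simp
  qed
  also have "\<dots> \<le> (\<integral>a. opt_alloc m i (a $ i) * social_value i a \<partial>F i)"
    using meas range by (rule integral_mult_social_value_le_opt_alloc)
  finally show ?thesis .
qed

end

lemma integral_xopt_social_value:
  "integrable (PiM UNIV F) (\<lambda>t. xopt m (\<lambda>j. Some (t j)) i * social_value i (t i))"
  "(\<integral>t. xopt m (\<lambda>j. Some (t j)) i * social_value i (t i) \<partial>PiM UNIV F)
     = (\<integral>a. opt_alloc m i (a $ i) * social_value i a \<partial>F i)"
  unfolding xopt_truthful
  by (auto intro!: integrable_PiM_component integral_PiM_component prob integrable_mult_social_value
      simp: opt_alloc_def)

theorem expected_welfare_le_xopt: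
  assumes density: "\<And>i. \<exists>f. distributed (F i) lborel (\<lambda>t. t $ i) f"
    and "is_mechanism x p" "regular_mech F x p" "BNIC F T x p"
  shows "(\<integral>t. SW (x (\<lambda>j. Some (t j))) t \<partial>PiM UNIV F) \<le> (\<integral>t. SW (xopt m (\<lambda>j. Some (t j))) t \<partial>PiM UNIV F)"
proof -
  note alloc = integral_alloc_social_value[OF assms(2,3)]
  have "(\<integral>t. SW (x (\<lambda>j. Some (t j))) t \<partial>PiM UNIV F)
      = (\<Sum>i\<in>UNIV. \<integral>t. x (\<lambda>j. Some (t j)) i * social_value i (t i) \<partial>PiM UNIV F)"
    unfolding SW_eq_sum_social_value by (rule Bochner_Integration.integral_sum) (rule alloc(1))
  also have "\<dots> = (\<Sum>i\<in>UNIV. \<integral>a. interim_alloc F x i a * social_value i a \<partial>F i)"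
    by (simp only: alloc(2))
  also have "\<dots> \<le> (\<Sum>i\<in>UNIV. \<integral>a. opt_alloc m i (a $ i) * social_value i a \<partial>F i)"
  proof (rule sum_mono)
    fix i
    obtain f where "distributed (F i) lborel (\<lambda>t. t $ i) f" using density by blast
    then show "(\<integral>a. interim_alloc F x i a * social_value i a \<partial>F i) \<le> (\<integral>a. opt_alloc m i (a $ i) * social_value i a \<partial>F i)"
      by (rule integral_interim_alloc_le_opt_alloc[OF assms(2-4)])
  qed
  also have "\<dots> = (\<Sum>i\<in>UNIV. \<integral>t. xopt m (\<lambda>j. Some (t j)) i * social_value i (t i) \<partial>PiM UNIV F)"
    by (simp only: integral_xopt_social_value(2))
  also have "\<dots> = (\<integral>t. SW (xopt m (\<lambda>j. Some (t j))) t \<partial>PiM UNIV F)"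
    unfolding SW_eq_sum_social_value
    by (rule Bochner_Integration.integral_sum[symmetric]) (rule integral_xopt_social_value(1))
  finally show ?thesis .
qed

end

theorem mainTheorem4:
  fixes F :: "'n::finite \<Rightarrow> (real ^ 'n) measure"
    and lv uv :: "'n \<Rightarrow> real"
    and le ue :: "'n \<Rightarrow> 'n \<Rightarrow> real"
    and m :: "'n \<Rightarrow> 'n \<Rightarrow> real \<Rightarrow> real"
  assumes bounds_v: "\<And>i. 0 \<le> lv i \<and> lv i \<le> uv i"
    and bounds_eta: "\<And>i j. 0 \<le> le i j \<and> le i j \<le> ue i j"
    and prob: "\<And>i. prob_space (F i)"
    and sets_F: "\<And>i. sets (F i) = sets borel"
    and support: "\<And>i. AE t in F i. t \<in> Tset lv uv le ue i"
    and density: "\<And>i. \<exists>f. distributed (F i) lborel (\<lambda>t. t $ i) f"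
    and condexp: "\<And>i j. j \<noteq> i \<Longrightarrow> cond_exp_version (F i) i j (m i j)"
    and mono_g: "\<And>i. mono_on {lv i..uv i} (gfun m i)"
  shows "(\<forall>C. (\<forall>i. cempty F m i \<le> C i) \<longrightarrow>
            BNIC F (Tset lv uv le ue) (xopt m) (popt F m lv uv C) \<and>
            interimIR F (Tset lv uv le ue) (xopt m) (popt F m lv uv C))
       \<and> (\<forall>t i. (\<forall>j. t j \<in> Tset lv uv le ue j) \<longrightarrow>
            0 \<le> popt F m lv uv (cempty F m) (\<lambda>j. Some (t j)) i)
       \<and> (\<forall>x' p'. is_mechanism x' p' \<longrightarrow> regular_mech F x' p' \<longrightarrow>
            BNIC F (Tset lv uv le ue) x' p' \<longrightarrow>
            (\<integral>t. SW (x' (\<lambda>j. Some (t j))) t \<partial>(PiM UNIV F))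
              \<le> (\<integral>t. SW (xopt m (\<lambda>j. Some (t j))) t \<partial>(PiM UNIV F)))"
proof -
  interpret common_prior F lv uv le ue m
    by (rule common_prior.intro) (fact bounds_v bounds_eta prob sets_F support condexp)+
  show ?thesis
  proof (intro conjI allI impI)
    fix C assume "\<forall>i. cempty F m i \<le> C i"
    then have C: "\<And>i. cempty F m i \<le> C i" by blast
    show "BNIC F T (xopt m) (popt F m lv uv C)" by (rule xopt_popt_BNIC_interimIR(1)[OF mono_g C])
    show "interimIR F T (xopt m) (popt F m lv uv C)" by (rule xopt_popt_BNIC_interimIR(2)[OF mono_g C])
  next
    fix x p assume "is_mechanism x p" "regular_mech F x p" "BNIC F T x p"
    then show "(\<integral>t. SW (x (\<lambda>j. Some (t j))) t \<partial>PiM UNIV F) \<le> (\<integral>t. SW (xopt m (\<lambda>j. Some (t j))) t \<partial>PiM UNIV F)"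
      by (rule expected_welfare_le_xopt[OF density])
  qed (rule popt_cempty_nonneg)
qed

end
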